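(* Let $I_n$ denote the number of inversion sequences of length $n$ avoiding all of the patterns $010,101,110,120,201,210$ (with $I_0=1$). Let $X=X(z)$ be the unique formal power series in $z$ satisfying $1-X-zX+2zX^2+z^2X-z^2X^3=0$. Then $$\sum_{n\ge0}I_nz^n=\frac{(X-1)(1-zX+z^2X)}{zX}=1+z+2z^2+5z^3+15z^4+50z^5+178z^6+663z^7+\cdots.$$
   Context: An inversion sequence of length $n$ is an integer sequence $(a_1,\dots,a_n)$ with $0\le a_i<i$ for all $i$. A pattern is a sequence $\sigma$ of non-negative integers containing every value from $0$ to $\max(\sigma)$; the reduction of a sequence replaces its smallest values by $0$, the next smallest by $1$, etc. A sequence $a$ contains $\sigma$ if some (not necessarily consecutive) subsequence of $a$ has reduction $\sigma$; otherwise $a$ avoids $\sigma$. Equivalently, these are the inversion sequences with no $i<j<k$ such that $a_j\ne a_k$ and $a_i\ge a_k$. *)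

theory Defs
  imports "HOL-Computational_Algebra.Formal_Power_Series"
begin

text \<open>Inversion sequences, 0-indexed: a list a of length n with a!i < i+1
  (i.e. a_i < i in 1-indexed notation).\<close>
definition inv_seq :: "nat list \<Rightarrow> bool" where
  "inv_seq a \<longleftrightarrow> (\<forall>i < length a. a ! i < i + 1)"

definition reduction :: "nat list \<Rightarrow> nat list" where
  "reduction xs = map (\<lambda>x. card {y \<in> set xs. y < x}) xs"

definition contains :: "nat list \<Rightarrow> nat list \<Rightarrow> bool" where
  "contains a \<sigma> \<longleftrightarrow> (\<exists>S. reduction (nths a S) = \<sigma>)"

definition avoids :: "nat list \<Rightarrow> nat list \<Rightarrow> bool" where
  "avoids a \<sigma> \<longleftrightarrow> \<not> contains a \<sigma>"

definition patterns6 :: "nat list set" where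
  "patterns6 = {[0,1,0], [1,0,1], [1,1,0], [1,2,0], [2,0,1], [2,1,0]}"

definition I :: "nat \<Rightarrow> nat" where
  "I n = card {a. length a = n \<and> inv_seq a \<and> (\<forall>\<sigma>\<in>patterns6. avoids a \<sigma>)}"

end

(*
  An inversion sequence avoids 010, 101, 110, 120, 201, 210 iff it has no i < j < k with
  a_j \<noteq> a_k and a_i \<ge> a_k. A nonempty such sequence a of length L and maximum M extends
  exactly by its last entry and by the values from (maximum of the earlier entries) + 1 up to L.
  Hence gap = L - M and slack = (number of appendable values up to M, other than the last entry)
  obey a generating-tree rule: a node (g, c) has 1 + c children (g + 1, 0) and one child
  (j, g - j) for each 1 \<le> j \<le> g. For the generating functions S_k and T_k of the number and
  the total slack of the sequences of gap k, the rule becomes a linear system, solved by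
  S_k = K Y^(k-1) and T_k = z Y S_k / (1 - Y)^2, where Y = zX and K = z (1 - Y) / (1 - Y - z);
  the cubic equation for X is exactly what makes this ansatz consistent. Summing over k gives
  1 + z / (1 - Y - z), the stated expression. The cubic has a unique power series root since
  X \<mapsto> 1 - zX + 2zX^2 + z^2X - z^2X^3 is a contraction for the z-adic distance.
*)

theory Submission
  imports Defs "HOL-Library.More_List"
begin

unbundle fps_syntax

section \<open>The six patterns as a condition on triples\<close>

lemma card_less_triple:
  "card {w \<in> {x, y, z :: nat}. w < v} =
     (if x < v then 1 else 0) + (if y < v \<and> y \<noteq> x then 1 else 0)
     + (if z < v \<and> z \<noteq> x \<and> z \<noteq> y then 1 else 0)"
proof -
  have "{w \<in> {x, y, z}. w < v} =
      (if x < v then {x} else {}) \<union> (if y < v then {y} else {}) \<union> (if z < v then {z} else {})"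
    by auto
  then show ?thesis by (auto simp: card_insert_if)
qed

lemma reduction_triple_in_patterns6_iff:
  "reduction [x, y, z] \<in> patterns6 \<longleftrightarrow> y \<noteq> z \<and> z \<le> (x :: nat)"
  unfolding reduction_def patterns6_def
  by (simp only: list.set list.map card_less_triple set_simps insert_commute)
    (cases "x < y"; cases "y < z"; cases "x < z"; cases "x = y"; cases "y = z"; cases "x = z"; auto)

lemma nths_conv_map_nth: "nths a S = map ((!) a) (nths [0..<length a] S)"
  by (metis length_map map_nth nths_map)

lemma nths_of_length_3:
  assumes "length (nths a S) = 3"
  obtains i j k where "i < j" "j < k" "k < length a" "nths a S = [a ! i, a ! j, a ! k]"
proof -
  let ?l = "nths [0..<length a] S"
  have "length ?l = 3" using assms by (simp add: nths_conv_map_nth[of a S])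
  then obtain i j k where l: "?l = [i, j, k]" by (auto simp: numeral_3_eq_3 length_Suc_conv)
  have "sorted ?l" "distinct ?l" "set ?l \<subseteq> {0..<length a}"
    by (auto intro: sorted_nths distinct_nthsI dest: in_set_nthsD)
  then have "i < j" "j < k" "k < length a" using l by auto
  moreover have "nths a S = [a ! i, a ! j, a ! k]" by (simp add: nths_conv_map_nth[of a S] l)
  ultimately show ?thesis using that by blast
qed

lemma nths_three_indices:
  assumes "i < j" "j < k" "k < length a"
  shows "nths a {i, j, k} = [a ! i, a ! j, a ! k]"
proof -
  have "{t. t < length a \<and> [0..<length a] ! t \<in> {i, j, k}} = {i, j, k}"
    using assms by auto
  then have "nths [0..<length a] {i, j, k} = filter (\<lambda>x. x \<in> {i, j, k}) [0..<length a]"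
    by (simp add: filter_eq_nths)
  also have "\<dots> = [i, j, k]"
    by (rule sorted_distinct_set_unique) (use assms in \<open>auto intro: sorted_wrt_filter\<close>)
  finally show ?thesis by (simp add: nths_conv_map_nth[of a "{i, j, k}"])
qed

definition no_bad_triple :: "nat list \<Rightarrow> bool" where
  "no_bad_triple a \<longleftrightarrow>
     (\<forall>i j k. i < j \<longrightarrow> j < k \<longrightarrow> k < length a \<longrightarrow> a ! j \<noteq> a ! k \<longrightarrow> a ! i < a ! k)"

lemma avoids_patterns6_iff: "(\<forall>\<sigma>\<in>patterns6. avoids a \<sigma>) \<longleftrightarrow> no_bad_triple a"
proof
  assume avoid: "\<forall>\<sigma>\<in>patterns6. avoids a \<sigma>"
  show "no_bad_triple a" unfolding no_bad_triple_def
  proof (intro allI impI, rule ccontr)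
    fix i j k assume "i < j" "j < k" "k < length a" "a ! j \<noteq> a ! k" "\<not> a ! i < a ! k"
    then have "reduction (nths a {i, j, k}) \<in> patterns6"
      by (simp add: nths_three_indices reduction_triple_in_patterns6_iff)
    then show False using avoid by (auto simp: avoids_def contains_def)
  qed
next
  assume good: "no_bad_triple a"
  show "\<forall>\<sigma>\<in>patterns6. avoids a \<sigma>" unfolding avoids_def contains_def
  proof (intro ballI notI)
    fix \<sigma> assume \<sigma>: "\<sigma> \<in> patterns6" and "\<exists>S. reduction (nths a S) = \<sigma>"
    then obtain S where red: "reduction (nths a S) = \<sigma>" by blast
    then have "length (nths a S) = 3" using \<sigma> by (auto simp: patterns6_def reduction_def)
    then obtain i j k where ijk: "i < j" "j < k" "k < length a" "nths a S = [a ! i, a ! j, a ! k]"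
      by (rule nths_of_length_3)
    then have "a ! j \<noteq> a ! k \<and> a ! k \<le> a ! i"
      using red \<sigma> by (simp add: reduction_triple_in_patterns6_iff[symmetric])
    then show False using good ijk unfolding no_bad_triple_def by (meson leD)
  qed
qed

section \<open>Growing avoiders by appending an entry\<close>

definition avoiders :: "nat \<Rightarrow> nat list set" where
  "avoiders n = {a. length a = n \<and> inv_seq a \<and> no_bad_triple a}"

lemma I_eq_card_avoiders: "I n = card (avoiders n)"
  by (simp add: I_def avoiders_def avoids_patterns6_iff)

lemma avoiders_0: "avoiders 0 = {[]}"
  by (auto simp: avoiders_def inv_seq_def no_bad_triple_def)

lemma avoiders_1: "avoiders (Suc 0) = {[0]}"
  by (auto simp: avoiders_def inv_seq_def no_bad_triple_def length_Suc_conv)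

lemma inv_seq_less_length: "inv_seq a \<Longrightarrow> y \<in> set a \<Longrightarrow> y < length a"
  by (fastforce simp: inv_seq_def in_set_conv_nth)

lemma finite_avoiders: "finite (avoiders n)"
proof (rule finite_subset)
  show "avoiders n \<subseteq> {a. set a \<subseteq> {..n} \<and> length a = n}"
    by (auto simp: avoiders_def dest: inv_seq_less_length)
  show "finite {a. set a \<subseteq> {..n} \<and> length a = n}"
    by (rule finite_lists_length_eq) simp
qed

lemma inv_seq_snoc: "inv_seq (a @ [x]) \<longleftrightarrow> inv_seq a \<and> x \<le> length a"
  by (auto simp: inv_seq_def nth_append less_Suc_eq)

lemma no_bad_triple_snoc:
  "no_bad_triple (a @ [x]) \<longleftrightarrow>
     no_bad_triple a \<and> (\<forall>i j. i < j \<longrightarrow> j < length a \<longrightarrow> a ! j \<noteq> x \<longrightarrow> a ! i < x)"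
  (is "?lhs \<longleftrightarrow> no_bad_triple a \<and> ?last")
proof
  assume lhs: ?lhs
  have "a ! i < a ! k" if "i < j" "j < k" "k < length a" "a ! j \<noteq> a ! k" for i j k
    using lhs[unfolded no_bad_triple_def, rule_format, of i j k] that by (simp add: nth_append)
  moreover have "a ! i < x" if "i < j" "j < length a" "a ! j \<noteq> x" for i j
    using lhs[unfolded no_bad_triple_def, rule_format, of i j "length a"] that by (simp add: nth_append)
  ultimately show "no_bad_triple a \<and> ?last" unfolding no_bad_triple_def by blast
next
  assume "no_bad_triple a \<and> ?last"
  then show ?lhs unfolding no_bad_triple_def
    by (auto simp: nth_append less_Suc_eq)
qed

definition prefix_bound :: "nat list \<Rightarrow> nat" where
  "prefix_bound a = (if butlast a = [] then 0 else Suc (Max (set (butlast a))))"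

lemma prefix_bound_le_iff: "prefix_bound a \<le> x \<longleftrightarrow> (\<forall>y\<in>set (butlast a). y < x)"
  by (simp add: prefix_bound_def Suc_le_eq)

lemma prefix_bound_snoc: "a \<noteq> [] \<Longrightarrow> prefix_bound (a @ [x]) = Suc (Max (set a))"
  by (simp add: prefix_bound_def)

lemma Max_set_conv_prefix_bound:
  assumes "a \<noteq> []"
  shows "Max (set a) = (if prefix_bound a \<le> last a then last a else prefix_bound a - 1)"
proof (cases "butlast a = []")
  case True
  then obtain y where "a = [y]" using assms by (cases a rule: rev_cases) auto
  then show ?thesis by (simp add: prefix_bound_def)
next
  case False
  have "set a = insert (last a) (set (butlast a))"
    using assms by (cases a rule: rev_cases) auto
  then show ?thesis using False by (auto simp: prefix_bound_def)
qed

lemma no_bad_triple_snoc_iff: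
  assumes good: "no_bad_triple a" and "a \<noteq> []"
  shows "no_bad_triple (a @ [x]) \<longleftrightarrow> x = last a \<or> prefix_bound a \<le> x"
proof -
  define m where "m = length a - 1"
  have m: "m < length a" "last a = a ! m" using \<open>a \<noteq> []\<close> by (auto simp: m_def last_conv_nth)
  have prefix: "prefix_bound a \<le> x \<longleftrightarrow> (\<forall>i<m. a ! i < x)"
    by (auto simp: prefix_bound_le_iff set_conv_nth nth_butlast m_def)
  have "(\<forall>i j. i < j \<longrightarrow> j < length a \<longrightarrow> a ! j \<noteq> x \<longrightarrow> a ! i < x) \<longleftrightarrow>
      x = a ! m \<or> (\<forall>i<m. a ! i < x)"
  proof (intro iffI allI impI)
    fix i j assume x: "x = a ! m \<or> (\<forall>i<m. a ! i < x)" and ij: "i < j" "j < length a" "a ! j \<noteq> x"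
    show "a ! i < x"
    proof (cases "x = a ! m")
      case True
      then have "j < m" using ij by (cases "j = m") (auto simp: m_def)
      then show ?thesis using good[unfolded no_bad_triple_def, rule_format, of i j m] ij True m by auto
    qed (use x ij in \<open>auto simp: m_def\<close>)
  qed (use m in auto)
  then show ?thesis using good by (simp add: no_bad_triple_snoc prefix m)
qed

definition appendable :: "nat list \<Rightarrow> nat set" where
  "appendable a = {x. x \<le> length a \<and> (x = last a \<or> prefix_bound a \<le> x)}"

lemma finite_appendable: "finite (appendable a)"
  by (rule finite_subset[of _ "{..length a}"]) (auto simp: appendable_def)

lemma avoiders_Suc:
  assumes "n \<ge> 1"
  shows "avoiders (Suc n) = (\<lambda>(a, x). a @ [x]) ` (SIGMA a:avoiders n. appendable a)"
proof (intro equalityI subsetI)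
  fix b assume b: "b \<in> avoiders (Suc n)"
  then obtain a x where "b = a @ [x]" by (cases b rule: rev_cases) (auto simp: avoiders_def)
  with b have a: "a \<in> avoiders n" and "no_bad_triple (a @ [x])" "x \<le> length a"
    by (auto simp: avoiders_def inv_seq_snoc no_bad_triple_snoc)
  moreover have "a \<noteq> []" using a assms by (auto simp: avoiders_def)
  ultimately have "x \<in> appendable a"
    by (auto simp: avoiders_def appendable_def no_bad_triple_snoc_iff)
  with a show "b \<in> (\<lambda>(a, x). a @ [x]) ` (SIGMA a:avoiders n. appendable a)"
    using \<open>b = a @ [x]\<close> by auto
next
  fix b assume "b \<in> (\<lambda>(a, x). a @ [x]) ` (SIGMA a:avoiders n. appendable a)"
  then obtain a x where a: "a \<in> avoiders n" and "x \<in> appendable a" "b = a @ [x]" by auto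
  moreover have "a \<noteq> []" using a assms by (auto simp: avoiders_def)
  ultimately show "b \<in> avoiders (Suc n)"
    by (auto simp: avoiders_def appendable_def inv_seq_snoc no_bad_triple_snoc_iff)
qed

lemma sum_avoiders_Suc:
  assumes "n \<ge> 1"
  shows "(\<Sum>b\<in>avoiders (Suc n). f b) = (\<Sum>a\<in>avoiders n. \<Sum>x\<in>appendable a. f (a @ [x]))"
proof -
  have "inj_on (\<lambda>(a, x). a @ [x]) (SIGMA a:avoiders n. appendable a)"
    by (auto simp: inj_on_def)
  then show ?thesis
    by (simp add: avoiders_Suc[OF assms] sum.reindex sum.Sigma finite_avoiders finite_appendable
        split_def)
qed

section \<open>Counting by gap and slack\<close>

definition gap :: "nat list \<Rightarrow> nat" where
  "gap a = length a - Max (set a)"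

(* 1 + slack a of the values appendable to a do not exceed Max (set a); the subtraction
   truncates to 0 when last a < prefix_bound a. *)
definition slack :: "nat list \<Rightarrow> nat" where
  "slack a = last a - prefix_bound a"

lemma inv_seq_Max_less_length: "inv_seq a \<Longrightarrow> a \<noteq> [] \<Longrightarrow> Max (set a) < length a"
  by (simp add: inv_seq_less_length)

lemma gap_avoiders:
  assumes "a \<in> avoiders n" "n \<ge> 1"
  shows "1 \<le> gap a" "gap a \<le> n"
proof -
  have "a \<noteq> []" "inv_seq a" "length a = n" using assms by (auto simp: avoiders_def)
  moreover from this have "Max (set a) < length a" by (intro inv_seq_Max_less_length)
  ultimately show "1 \<le> gap a" "gap a \<le> n" unfolding gap_def by linarith+
qed

(* Appending a value up to the maximum M gives gap g + 1 and slack 0; appending M + t with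
   1 \<le> t \<le> g gives gap g + 1 - t and slack t - 1. *)
lemma sum_appendable:
  fixes \<phi> :: "nat \<Rightarrow> nat \<Rightarrow> nat"
  assumes "inv_seq a" "a \<noteq> []"
  shows "(\<Sum>x\<in>appendable a. \<phi> (gap (a @ [x])) (slack (a @ [x]))) =
    (1 + slack a) * \<phi> (Suc (gap a)) 0 + (\<Sum>j = 1..gap a. \<phi> j (gap a - j))"
proof -
  define L M l p where "L = length a" "M = Max (set a)" "l = last a" "p = prefix_bound a"
  have "M < L" "l \<le> M" using assms inv_seq_Max_less_length by (auto simp: L_M_l_p_def)
  have M: "M = (if p \<le> l then l else p - 1)"
    using Max_set_conv_prefix_bound[OF assms(2)] by (simp add: L_M_l_p_def)
  define below where "below = insert l {p..M}"
  have appendable: "appendable a = below \<union> {Suc M..L}"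
    using \<open>M < L\<close> \<open>l \<le> M\<close> M by (auto simp: appendable_def below_def L_M_l_p_def)
  have "card below = 1 + slack a"
  proof (cases "p \<le> l")
    case True
    then have "below = {p..l}" using M by (auto simp: below_def)
    then show ?thesis using True by (simp add: slack_def L_M_l_p_def)
  next
    case False
    then have "below = {l}" using M by (auto simp: below_def)
    then show ?thesis using False by (simp add: slack_def L_M_l_p_def)
  qed
  have gap: "gap a = L - M" by (simp add: gap_def L_M_l_p_def)
  have child: "gap (a @ [x]) = Suc L - max x M" "slack (a @ [x]) = x - Suc M" for x
    using assms(2) by (simp_all add: gap_def slack_def prefix_bound_snoc L_M_l_p_def)
  have "(\<Sum>x\<in>below. \<phi> (gap (a @ [x])) (slack (a @ [x]))) = (1 + slack a) * \<phi> (Suc (gap a)) 0"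
  proof -
    have "\<phi> (gap (a @ [x])) (slack (a @ [x])) = \<phi> (Suc (gap a)) 0" if "x \<in> below" for x
      using that \<open>M < L\<close> \<open>l \<le> M\<close> by (auto simp: child below_def gap Suc_diff_le)
    then show ?thesis using \<open>card below = 1 + slack a\<close> by simp
  qed
  moreover have "(\<Sum>x = Suc M..L. \<phi> (gap (a @ [x])) (slack (a @ [x]))) =
      (\<Sum>j = 1..gap a. \<phi> j (gap a - j))"
    by (rule sum.reindex_bij_witness[of _ "\<lambda>j. Suc L - j" "\<lambda>x. Suc L - x"])
      (use \<open>M < L\<close> in \<open>auto simp: child gap\<close>)
  moreover have "below \<inter> {Suc M..L} = {}" "finite below" using \<open>l \<le> M\<close> by (auto simp: below_def)
  ultimately show ?thesis by (simp add: appendable sum.union_disjoint)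
qed

lemma sum_appendable_gap_eq:
  fixes f :: "nat \<Rightarrow> nat"
  assumes "a \<in> avoiders n" "n \<ge> 1" "k \<ge> 1"
  shows "(\<Sum>x\<in>appendable a. if gap (a @ [x]) = k then f (slack (a @ [x])) else 0) =
    (if gap a = k - 1 then (1 + slack a) * f 0 else 0) + (if k \<le> gap a then f (gap a - k) else 0)"
proof -
  have "inv_seq a" "a \<noteq> []" using assms(1,2) by (auto simp: avoiders_def)
  from sum_appendable[OF this, of "\<lambda>g c. if g = k then f c else 0"] show ?thesis
    using assms(3) by (cases k) (simp_all add: sum.delta)
qed

definition gap_count :: "nat \<Rightarrow> nat \<Rightarrow> nat" where
  "gap_count n k = card {a \<in> avoiders n. gap a = k}"

definition gap_slack :: "nat \<Rightarrow> nat \<Rightarrow> nat" where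
  "gap_slack n k = (\<Sum>a\<in>{a \<in> avoiders n. gap a = k}. slack a)"

lemma gap_count_conv_sum: "gap_count n k = (\<Sum>a\<in>avoiders n. if gap a = k then 1 else 0)"
  by (simp add: gap_count_def sum.inter_filter[symmetric] finite_avoiders)

lemma gap_slack_conv_sum: "gap_slack n k = (\<Sum>a\<in>avoiders n. if gap a = k then slack a else 0)"
  by (simp add: gap_slack_def sum.inter_filter finite_avoiders)

lemma gap_count_1_gap_slack_1:
  "gap_count (Suc 0) k = (if k = 1 then 1 else 0)" "gap_slack (Suc 0) k = 0"
proof -
  have "{a \<in> avoiders (Suc 0). gap a = k} = (if k = 1 then {[0]} else {})"
    by (auto simp: avoiders_1 gap_def)
  then show "gap_count (Suc 0) k = (if k = 1 then 1 else 0)" "gap_slack (Suc 0) k = 0"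
    unfolding gap_count_def gap_slack_def by (simp_all add: slack_def prefix_bound_def)
qed

lemma gap_count_0_gap_slack_0:
  assumes "n \<ge> 1"
  shows "gap_count n 0 = 0" "gap_slack n 0 = 0"
proof -
  have none: "{a \<in> avoiders n. gap a = 0} = {}" using gap_avoiders(1)[OF _ assms] by fastforce
  show "gap_count n 0 = 0" "gap_slack n 0 = 0" unfolding gap_count_def gap_slack_def none by simp_all
qed

lemma sum_avoiders_gap_ge:
  fixes f :: "nat \<Rightarrow> nat"
  assumes "n \<ge> 1"
  shows "(\<Sum>a\<in>avoiders n. if k \<le> gap a then f (gap a - k) else 0) =
    (\<Sum>i\<le>n. f i * gap_count n (k + i))"
proof -
  have "(\<Sum>i\<le>n. f i * gap_count n (k + i)) =
      (\<Sum>a\<in>avoiders n. \<Sum>i\<le>n. if gap a = k + i then f i else 0)"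
    by (simp add: gap_count_conv_sum sum_distrib_left if_distrib sum.swap[of _ "avoiders n"]
        cong: if_cong)
  also have "\<dots> = (\<Sum>a\<in>avoiders n. if k \<le> gap a then f (gap a - k) else 0)"
  proof (rule sum.cong[OF refl])
    fix a assume "a \<in> avoiders n"
    then have "gap a \<le> n" using assms by (rule gap_avoiders)
    have "(\<Sum>i\<le>n. if gap a = k + i then f i else 0) =
        (\<Sum>i\<le>n. if i = gap a - k then (if k \<le> gap a then f i else 0) else 0)"
      by (rule sum.cong) auto
    also have "\<dots> = (if k \<le> gap a then f (gap a - k) else 0)"
      using le_trans[OF diff_le_self \<open>gap a \<le> n\<close>] by (simp add: sum.delta)
    finally show "(\<Sum>i\<le>n. if gap a = k + i then f i else 0) =
        (if k \<le> gap a then f (gap a - k) else 0)" .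
  qed
  finally show ?thesis by simp
qed

lemma card_avoiders_conv_gap_count:
  assumes "n \<ge> 1"
  shows "card (avoiders n) = (\<Sum>i\<le>n. gap_count n (1 + i))"
  using sum_avoiders_gap_ge[OF assms, of 1 "\<lambda>_. 1"] gap_avoiders[OF _ assms] by simp

lemma gap_count_Suc:
  assumes "n \<ge> 1" "k \<ge> 1"
  shows "gap_count (Suc n) k = gap_count n (k - 1) + gap_slack n (k - 1) + (\<Sum>i\<le>n. gap_count n (k + i))"
proof -
  have "gap_count (Suc n) k =
      (\<Sum>a\<in>avoiders n. \<Sum>x\<in>appendable a. if gap (a @ [x]) = k then 1 else 0)"
    by (simp add: gap_count_conv_sum sum_avoiders_Suc[OF assms(1)])
  also have "\<dots> = (\<Sum>a\<in>avoiders n.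
      (if gap a = k - 1 then 1 else 0) + (if gap a = k - 1 then slack a else 0) + (if k \<le> gap a then 1 else 0))"
    using sum_appendable_gap_eq[OF _ assms, of _ "\<lambda>_. 1"] by (intro sum.cong refl) simp
  also have "\<dots> = gap_count n (k - 1) + gap_slack n (k - 1) + (\<Sum>i\<le>n. gap_count n (k + i))"
    using sum_avoiders_gap_ge[OF assms(1), of k "\<lambda>_. 1"]
    by (simp add: sum.distrib gap_count_conv_sum gap_slack_conv_sum)
  finally show ?thesis .
qed

lemma gap_slack_Suc:
  assumes "n \<ge> 1" "k \<ge> 1"
  shows "gap_slack (Suc n) k = (\<Sum>i\<le>n. i * gap_count n (k + i))"
proof -
  have "gap_slack (Suc n) k =
      (\<Sum>a\<in>avoiders n. \<Sum>x\<in>appendable a. if gap (a @ [x]) = k then slack (a @ [x]) else 0)"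
    by (simp add: gap_slack_conv_sum sum_avoiders_Suc[OF assms(1)])
  also have "\<dots> = (\<Sum>a\<in>avoiders n. if k \<le> gap a then gap a - k else 0)"
    using sum_appendable_gap_eq[OF _ assms, of _ "\<lambda>c. c"] by (intro sum.cong refl) simp
  finally show ?thesis using sum_avoiders_gap_ge[OF assms(1), of k "\<lambda>i. i"] by (simp add: mult.commute)
qed

section \<open>Power series tools\<close>

lemma fps_X_power_dvd_iff: "fps_X ^ k dvd (F :: 'a::comm_ring_1 fps) \<longleftrightarrow> (\<forall>j<k. F $ j = 0)"
proof
  assume "fps_X ^ k dvd F"
  then obtain G where "F = fps_X ^ k * G" by (elim dvdE)
  then show "\<forall>j<k. F $ j = 0" by (simp add: fps_X_power_mult_nth)
next
  assume "\<forall>j<k. F $ j = 0"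
  then have "F = fps_X ^ k * fps_shift k F" by (intro fps_ext) (simp add: fps_X_power_mult_nth)
  then show "fps_X ^ k dvd F" by (rule dvdI)
qed

lemma fps_nth_eq_if_X_power_dvd_diff:
  "fps_X ^ Suc n dvd (A - B :: 'a::comm_ring_1 fps) \<Longrightarrow> A $ n = B $ n"
  unfolding fps_X_power_dvd_iff by simp

lemma fps_X_dvd_imp_nth_0: "fps_X dvd (F :: 'a::comm_ring_1 fps) \<Longrightarrow> F $ 0 = 0"
  using fps_X_power_dvd_iff[of 1 F] by simp

lemma fps_one_minus_times_inverse:
  fixes F :: "'a::field fps"
  assumes "fps_X dvd F"
  shows "(1 - F) * inverse (1 - F) = 1"
  using assms by (intro inverse_mult_eq_1') (simp add: fps_X_dvd_imp_nth_0)

lemma fps_nth_times_inverse_one_minus: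
  fixes A F :: "'a::field fps"
  assumes "fps_X dvd F"
  shows "(A * inverse (1 - F)) $ n = (\<Sum>i\<le>n. A * F ^ i) $ n"
proof (rule fps_nth_eq_if_X_power_dvd_diff)
  define R where "R = A * inverse (1 - F)"
  have A: "A = (1 - F) * R"
    by (simp add: R_def fps_one_minus_times_inverse[OF assms] mult.left_commute[of "1 - F"])
  have "(\<Sum>i\<le>n. A * F ^ i) = R * ((1 - F) * (\<Sum>i\<le>n. F ^ i))"
    by (simp add: sum_distrib_left[symmetric] A mult_ac)
  also have "\<dots> = R - F ^ Suc n * R" by (simp only: sum_gp_basic) (simp add: algebra_simps)
  finally have "R - (\<Sum>i\<le>n. A * F ^ i) = F ^ Suc n * R" by simp
  then show "fps_X ^ Suc n dvd A * inverse (1 - F) - (\<Sum>i\<le>n. A * F ^ i)"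
    using assms by (simp only: R_def) (intro dvd_mult2 dvd_power_same)
qed

lemma one_minus_squared_times_sum_of_nat_power:
  fixes x :: "'a::comm_ring_1"
  shows "(1 - x)^2 * (\<Sum>i\<le>n. of_nat i * x ^ i) =
    x - of_nat (Suc n) * x ^ Suc n + of_nat n * x ^ Suc (Suc n)"
  by (induction n) (simp_all add: algebra_simps power2_eq_square)

lemma fps_nth_times_inverse_one_minus_squared:
  fixes A F :: "'a::field fps"
  assumes "fps_X dvd F"
  shows "(A * F * inverse (1 - F) ^ 2) $ n = (\<Sum>i\<le>n. of_nat i * (A * F ^ i)) $ n"
proof (rule fps_nth_eq_if_X_power_dvd_diff)
  define R where "R = A * inverse (1 - F) ^ 2"
  have A: "A = (1 - F) ^ 2 * R"
    by (simp add: R_def power_mult_distrib[symmetric] fps_one_minus_times_inverse[OF assms]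
        mult.left_commute[of "(1 - F) ^ 2"])
  have "(\<Sum>i\<le>n. of_nat i * (A * F ^ i)) = R * ((1 - F) ^ 2 * (\<Sum>i\<le>n. of_nat i * F ^ i))"
    by (simp add: sum_distrib_left A mult_ac)
  also have "\<dots> = R * F - F ^ Suc n * (R * (of_nat (Suc n) - of_nat n * F))"
    by (simp add: one_minus_squared_times_sum_of_nat_power algebra_simps)
  finally have diff: "R * F - (\<Sum>i\<le>n. of_nat i * (A * F ^ i)) =
      F ^ Suc n * (R * (of_nat (Suc n) - of_nat n * F))"
    by simp
  have RF: "A * F * inverse (1 - F) ^ 2 = R * F" by (simp add: R_def mult_ac)
  show "fps_X ^ Suc n dvd A * F * inverse (1 - F) ^ 2 - (\<Sum>i\<le>n. of_nat i * (A * F ^ i))"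
    unfolding RF diff using assms by (intro dvd_mult2 dvd_power_same)
qed

lemma fps_contraction_X_power_dvd:
  fixes \<Phi> :: "'a::comm_ring_1 fps \<Rightarrow> 'a fps"
  assumes contraction: "\<And>A B. fps_X * (A - B) dvd \<Phi> A - \<Phi> B"
    and "fps_X ^ k dvd A - B"
  shows "fps_X ^ Suc k dvd \<Phi> A - \<Phi> B"
  using mult_dvd_mono[OF dvd_refl[of fps_X] assms(2)] contraction[of A B] by (auto intro: dvd_trans)

lemma fps_contraction_fixpoint_unique:
  fixes \<Phi> :: "'a::comm_ring_1 fps \<Rightarrow> 'a fps"
  assumes contraction: "\<And>A B. fps_X * (A - B) dvd \<Phi> A - \<Phi> B"
    and "\<Phi> A = A" "\<Phi> B = B"
  shows "A = B"
proof -
  have "fps_X ^ k dvd A - B" for k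
  proof (induction k)
    case (Suc k)
    then show ?case using fps_contraction_X_power_dvd[OF contraction Suc] assms(2,3) by simp
  qed simp
  then show "A = B" by (metis fps_nth_eq_if_X_power_dvd_diff fps_ext)
qed

lemma fps_contraction_fixpoint_exists:
  fixes \<Phi> :: "'a::comm_ring_1 fps \<Rightarrow> 'a fps"
  assumes contraction: "\<And>A B. fps_X * (A - B) dvd \<Phi> A - \<Phi> B"
  shows "\<exists>A. \<Phi> A = A"
proof -
  note step = fps_contraction_X_power_dvd[OF contraction]
  define iter where "iter n = (\<Phi> ^^ n) 1" for n
  have iter_Suc: "fps_X ^ n dvd iter (Suc n) - iter n" for n
  proof (induction n)
    case (Suc n)
    then show ?case using step[of n "iter (Suc n)" "iter n"] by (simp add: iter_def)
  qed simp
  have iter_le: "fps_X ^ n dvd iter m - iter n" if "n \<le> m" for n m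
    using that
  proof (induction m rule: dec_induct)
    case (step m)
    have "iter (Suc m) - iter n = (iter (Suc m) - iter m) + (iter m - iter n)" by simp
    then show ?case using step.IH le_imp_power_dvd[OF step.hyps(1)] iter_Suc[of m]
      by (metis dvd_add dvd_trans)
  qed simp
  define L where "L = Abs_fps (\<lambda>n. iter (Suc n) $ n)"
  have L: "fps_X ^ m dvd L - iter m" for m
    unfolding fps_X_power_dvd_iff
  proof (intro allI impI)
    fix j assume "j < m"
    then have "fps_X ^ Suc j dvd iter m - iter (Suc j)" by (intro iter_le) simp
    then have "iter m $ j = iter (Suc j) $ j" by (rule fps_nth_eq_if_X_power_dvd_diff)
    then show "(L - iter m) $ j = 0" by (simp add: L_def)
  qed
  have "\<Phi> L = L"
  proof (rule fps_ext)
    fix m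
    have "\<Phi> L $ m = \<Phi> (iter m) $ m" by (rule fps_nth_eq_if_X_power_dvd_diff) (rule step[OF L])
    then show "\<Phi> L $ m = L $ m" by (simp add: L_def iter_def)
  qed
  then show ?thesis ..
qed

section \<open>The generating function\<close>

lemma cubic_has_unique_fps_root:
  "\<exists>!X :: 'a::comm_ring_1 fps.
     1 - X - fps_X * X + 2 * fps_X * X^2 + fps_X^2 * X - fps_X^2 * X^3 = 0"
proof -
  define \<Phi> where "\<Phi> A = 1 - fps_X * A + 2 * fps_X * A^2 + fps_X^2 * A - fps_X^2 * A^3" for A :: "'a fps"
  have contraction: "fps_X * (A - B) dvd \<Phi> A - \<Phi> B" for A B
    by (rule dvdI[of _ _ "2 * (A + B) + fps_X - fps_X * (A^2 + A * B + B^2) - 1"])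
      (simp add: \<Phi>_def algebra_simps power2_eq_square power3_eq_cube)
  have root_iff: "1 - A - fps_X * A + 2 * fps_X * A^2 + fps_X^2 * A - fps_X^2 * A^3 = 0 \<longleftrightarrow> \<Phi> A = A"
    for A
    by (simp add: \<Phi>_def eq_iff_diff_eq_0[of "\<Phi> A"] algebra_simps)
  show ?thesis
    unfolding root_iff
    using fps_contraction_fixpoint_exists[OF contraction] fps_contraction_fixpoint_unique[OF contraction]
    by blast
qed

locale cubic_root =
  fixes X :: "'a::field fps"
  assumes cubic: "1 - X - fps_X * X + 2 * fps_X * X^2 + fps_X^2 * X - fps_X^2 * X^3 = 0"
begin

definition "Y = fps_X * X"
definition "B = inverse (1 - Y)"
definition "D = inverse (1 - Y - fps_X)"
definition "K = fps_X * (1 - Y) * D"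

definition gap_gf :: "nat \<Rightarrow> 'a fps" where
  "gap_gf k = (if k = 0 then 0 else K * Y ^ (k - 1))"

definition slack_gf :: "nat \<Rightarrow> 'a fps" where
  "slack_gf k = fps_X * gap_gf k * Y * B^2"

lemma X_nth_0: "X $ 0 = 1"
proof -
  have "(1 - X - fps_X * X + 2 * fps_X * X^2 + fps_X^2 * X - fps_X^2 * X^3) $ 0 = 0"
    by (simp only: cubic) simp
  then show ?thesis by (simp add: power2_eq_square)
qed

lemma fps_X_dvd_Y: "fps_X dvd Y"
  by (simp add: Y_def)

lemma one_minus_Y_times_B: "(1 - Y) * B = 1"
  unfolding B_def by (rule fps_one_minus_times_inverse[OF fps_X_dvd_Y])

lemma one_minus_Y_minus_X_times_D: "(1 - Y - fps_X) * D = 1"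
  unfolding D_def by (rule inverse_mult_eq_1') (simp add: Y_def)

lemma Y_eq: "Y = fps_X * (1 + fps_X * Y * B^2 + Y * B)"
  using cubic one_minus_Y_times_B unfolding Y_def by algebra

lemma K_eq: "K = fps_X + fps_X * (K * B)"
  using one_minus_Y_times_B one_minus_Y_minus_X_times_D unfolding K_def by algebra

lemma K_times_B: "K * B = fps_X * D"
  using one_minus_Y_times_B unfolding K_def by algebra

lemma one_plus_X_times_D:
  "(1 + fps_X * D) * (fps_X * X) = (X - 1) * (1 - fps_X * X + fps_X^2 * X)"
  using cubic one_minus_Y_minus_X_times_D unfolding Y_def by algebra

lemma gap_gf_add: "k \<ge> 1 \<Longrightarrow> gap_gf (k + i) = gap_gf k * Y ^ i"
  by (simp add: gap_gf_def power_add[symmetric] mult.assoc)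

lemma sum_gap_gf_nth: "k \<ge> 1 \<Longrightarrow> (\<Sum>i\<le>n. gap_gf (k + i) $ n) = (gap_gf k * B) $ n"
  by (simp add: B_def fps_nth_times_inverse_one_minus[OF fps_X_dvd_Y] gap_gf_add fps_sum_nth)

lemma sum_of_nat_gap_gf_nth:
  "k \<ge> 1 \<Longrightarrow> (\<Sum>i\<le>n. of_nat i * gap_gf (k + i) $ n) = (gap_gf k * Y * B^2) $ n"
  by (simp add: B_def fps_nth_times_inverse_one_minus_squared[OF fps_X_dvd_Y] gap_gf_add
      fps_sum_nth fps_of_nat[symmetric])

lemma gap_gf_nth_Suc:
  assumes "n \<ge> 1" "k \<ge> 1"
  shows "gap_gf k $ Suc n = gap_gf (k - 1) $ n + slack_gf (k - 1) $ n + (\<Sum>i\<le>n. gap_gf (k + i) $ n)"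
proof (cases "k = 1")
  case True
  have "K $ Suc n = (K * B) $ n" using assms(1) by (subst K_eq) simp
  then show ?thesis using True sum_gap_gf_nth[of 1 n] by (simp add: gap_gf_def slack_gf_def)
next
  case False
  then have "gap_gf k = gap_gf (k - 1) * Y" using assms(2) gap_gf_add[of "k - 1" 1] by simp
  then have "gap_gf k = fps_X * (gap_gf (k - 1) + slack_gf (k - 1) + gap_gf k * B)"
    using Y_eq unfolding slack_gf_def by algebra
  then have "gap_gf k $ Suc n = (gap_gf (k - 1) + slack_gf (k - 1) + gap_gf k * B) $ n"
    by (metis fps_X_mult_nth diff_Suc_1 nat.distinct(1))
  then show ?thesis using assms(2) by (simp add: sum_gap_gf_nth)
qed

lemma slack_gf_nth_Suc:
  "k \<ge> 1 \<Longrightarrow> slack_gf k $ Suc n = (\<Sum>i\<le>n. of_nat i * gap_gf (k + i) $ n)"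
  by (simp add: sum_of_nat_gap_gf_nth slack_gf_def mult.assoc)

lemma gap_gf_nth_1: "gap_gf k $ Suc 0 = (if k = 1 then 1 else 0)"
  by (auto simp: gap_gf_def K_def D_def Y_def power_eq_if)

lemma slack_gf_nth_1: "slack_gf k $ Suc 0 = 0"
  by (simp add: slack_gf_def Y_def)

lemma of_nat_gap_count_gap_slack:
  assumes "n \<ge> 1"
  shows "of_nat (gap_count n k) = gap_gf k $ n \<and> of_nat (gap_slack n k) = slack_gf k $ n"
  using assms
proof (induction n arbitrary: k rule: dec_induct)
  case base
  show ?case by (simp add: gap_count_1_gap_slack_1 gap_gf_nth_1 slack_gf_nth_1)
next
  case (step n)
  show ?case
  proof (cases "k = 0")
    case True
    then show ?thesis by (simp add: gap_count_0_gap_slack_0 gap_gf_def slack_gf_def)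
  next
    case False
    then show ?thesis using step.hyps step.IH
      by (simp add: gap_count_Suc gap_slack_Suc gap_gf_nth_Suc slack_gf_nth_Suc)
  qed
qed

lemma I_gf_conv_D: "Abs_fps (\<lambda>n. of_nat (I n)) = 1 + fps_X * D"
proof (rule fps_ext)
  fix n
  show "Abs_fps (\<lambda>n. of_nat (I n)) $ n = (1 + fps_X * D) $ n"
  proof (cases "n = 0")
    case True
    then show ?thesis by (simp add: I_eq_card_avoiders avoiders_0)
  next
    case False
    then have "of_nat (I n) = (\<Sum>i\<le>n. gap_gf (1 + i) $ n)"
      using of_nat_gap_count_gap_slack[of n]
      by (simp add: I_eq_card_avoiders card_avoiders_conv_gap_count)
    also have "\<dots> = (fps_X * D) $ n"
      using sum_gap_gf_nth[of 1 n] by (simp add: gap_gf_def K_times_B)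
    finally show ?thesis using False by simp
  qed
qed

lemma I_gf_eq: "Abs_fps (\<lambda>n. of_nat (I n)) = (X - 1) * (1 - fps_X * X + fps_X^2 * X) / (fps_X * X)"
proof -
  have "(fps_X * X) $ 1 = 1" using X_nth_0 by simp
  then have "fps_X * X \<noteq> 0" by auto
  then show ?thesis by (simp add: I_gf_conv_D one_plus_X_times_D[symmetric] fps_divide_times_eq)
qed

end

section \<open>The initial values\<close>

fun next_row :: "nat \<Rightarrow> nat list \<times> nat list \<Rightarrow> nat list \<times> nat list" where
  "next_row n (s, t) =
    (map (\<lambda>k. if k = 0 then 0
              else nth_default 0 s (k - 1) + nth_default 0 t (k - 1) + (\<Sum>i\<le>n. nth_default 0 s (k + i)))
       [0..<n + 2],
     map (\<lambda>k. if k = 0 then 0 else \<Sum>i\<le>n. i * nth_default 0 s (k + i)) [0..<n + 2])"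

fun gap_table :: "nat \<Rightarrow> nat list \<times> nat list" where
  "gap_table 0 = ([0, 1], [0, 0])"
| "gap_table (Suc n) = next_row (Suc n) (gap_table n)"

lemma nth_default_map_upt: "nth_default 0 (map f [0..<m]) k = (if k < m then f k else 0)"
  by (simp add: nth_default_def)

lemma gap_count_gap_slack_above_length:
  assumes "n < k"
  shows "gap_count n k = 0" "gap_slack n k = 0"
proof -
  have none: "{a \<in> avoiders n. gap a = k} = {}"
    using assms by (auto simp: avoiders_def gap_def)
  show "gap_count n k = 0" "gap_slack n k = 0" unfolding gap_count_def gap_slack_def none by simp_all
qed

lemma gap_table_correct:
  "nth_default 0 (fst (gap_table n)) k = gap_count (Suc n) k \<and>
   nth_default 0 (snd (gap_table n)) k = gap_slack (Suc n) k"
proof (induction n arbitrary: k)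
  case 0
  show ?case by (auto simp: nth_default_def gap_count_1_gap_slack_1 nth_Cons split: nat.split)
next
  case (Suc n)
  obtain s t where st: "gap_table n = (s, t)" by fastforce
  have row: "gap_table (Suc n) = next_row (Suc n) (s, t)" by (simp add: st)
  consider "k = 0" | "k \<ge> Suc n + 2" | "1 \<le> k" "k < Suc n + 2" by linarith
  then show ?case
  proof cases
    case 1
    then show ?thesis
      by (simp only: row next_row.simps fst_conv snd_conv nth_default_map_upt) (simp add: gap_count_0_gap_slack_0)
  next
    case 2
    then show ?thesis
      by (simp only: row next_row.simps fst_conv snd_conv nth_default_map_upt) (simp add: gap_count_gap_slack_above_length)
  next
    case 3
    then show ?thesis using Suc.IH
      by (simp only: row next_row.simps fst_conv snd_conv nth_default_map_upt)
        (simp add: st gap_count_Suc gap_slack_Suc)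
  qed
qed

lemma I_conv_gap_table:
  "I = (\<lambda>n. if n = 0 then 1 else \<Sum>i\<le>n. nth_default 0 (fst (gap_table (n - 1))) (1 + i))"
proof
  fix n
  show "I n = (if n = 0 then 1 else \<Sum>i\<le>n. nth_default 0 (fst (gap_table (n - 1))) (1 + i))"
    by (cases n) (simp_all add: I_eq_card_avoiders avoiders_0 card_avoiders_conv_gap_count gap_table_correct)
qed

lemma I_initial_values: "map I [0..<8] = [1, 1, 2, 5, 15, 50, 178, 663]"
  unfolding I_conv_gap_table by code_simp

theorem mainTheorem6:
  shows "(\<exists>!X :: real fps. 1 - X - fps_X * X + 2 * fps_X * X^2 + fps_X^2 * X - fps_X^2 * X^3 = 0)
    \<and> (\<forall>X :: real fps. 1 - X - fps_X * X + 2 * fps_X * X^2 + fps_X^2 * X - fps_X^2 * X^3 = 0 \<longrightarrow>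
          Abs_fps (\<lambda>n. real (I n)) = (X - 1) * (1 - fps_X * X + fps_X^2 * X) / (fps_X * X))
    \<and> map I [0..<8] = [1, 1, 2, 5, 15, 50, 178, 663]"
proof (intro conjI allI impI)
  fix X :: "real fps"
  assume "1 - X - fps_X * X + 2 * fps_X * X^2 + fps_X^2 * X - fps_X^2 * X^3 = 0"
  then interpret cubic_root X by unfold_locales
  show "Abs_fps (\<lambda>n. real (I n)) = (X - 1) * (1 - fps_X * X + fps_X^2 * X) / (fps_X * X)"
    by (rule I_gf_eq)
qed (rule cubic_has_unique_fps_root I_initial_values)+

end
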